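(* Let $J$ be either a closed interval or a circle, let $n\geq 4$, let $\gamma:J\to\mathbb{R}^n$ be an injective continuous map of bounded variation, and let $\varepsilon>0$. Let $P:\mathbb{R}^n\to\mathbb{R}^{n-1}$ be the projection onto the last $n-1$ coordinates. Then there exists a linear operator $T:\mathbb{R}^n\to\mathbb{R}^{n-1}$ with $\|T-P\|<\varepsilon$ such that $T\circ\gamma$ is injective.
   Context: $\|\cdot\|$ denotes the operator norm with respect to the Euclidean norms. *)

theory Defs
  imports "HOL-Analysis.Analysis"
begin

definition bounded_variation_on :: "(real \<Rightarrow> 'a::real_normed_vector) \<Rightarrow> real \<Rightarrow> real \<Rightarrow> bool" where
  "bounded_variation_on f a b \<longleftrightarrow>
     (\<exists>M. \<forall>(n::nat) (t::nat \<Rightarrow> real).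
        (\<forall>i\<le>n. a \<le> t i \<and> t i \<le> b) \<and> (\<forall>i<n. t i \<le> t (Suc i)) \<longrightarrow>
        (\<Sum>i<n. norm (f (t (Suc i)) - f (t i))) \<le> M)"

definition circle_bounded_variation :: "(complex \<Rightarrow> 'a::real_normed_vector) \<Rightarrow> bool" where
  "circle_bounded_variation f \<longleftrightarrow> bounded_variation_on (\<lambda>t. f (cis (2 * pi * t))) 0 1"

end

theory Submission
  imports Defs
begin

text \<open>Write points of \<open>\<real>\<^sup>n\<close> as pairs \<open>(x, y)\<close> with \<open>x\<close> real, so that \<open>P (x, y) = y\<close>.
  The shear \<open>T\<^sub>w (x, y) = y - x w\<close> is linear with \<open>\<parallel>T\<^sub>w - P\<parallel> \<le> \<bar>w\<bar>\<close>, and it identifies two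
  distinct points exactly when their first coordinates differ and \<open>w\<close> is the slope of the secant
  through them. So it suffices to find a small \<open>w\<close> that is not a secant slope of the curve.
  Reparametrised by arc length, the curve becomes 1-Lipschitz on a set of reals, so its secant
  slopes are the image of a subset of the plane under a locally Lipschitz map into
  \<open>\<real>\<^sup>n\<^sup>-\<^sup>1\<close>; as \<open>n - 1 \<ge> 3\<close>, this image is Lebesgue-null and misses
  some point of every ball.\<close>

lemma locally_Lipschitz_at_comp_bounded_linear:
  assumes "bounded_linear \<pi>"
    and "\<exists>T B. open T \<and> \<pi> y \<in> T \<and> (\<forall>x \<in> S \<inter> T. norm (f x - f (\<pi> y)) \<le> B * norm (x - \<pi> y))"
  shows "\<exists>T B. open T \<and> y \<in> T \<and> (\<forall>y' \<in> \<pi> -` S \<inter> T. norm (f (\<pi> y') - f (\<pi> y)) \<le> B * norm (y' - y))"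
proof -
  obtain T B where "open T" "\<pi> y \<in> T"
    and B: "\<forall>x \<in> S \<inter> T. norm (f x - f (\<pi> y)) \<le> B * norm (x - \<pi> y)"
    using assms(2) by blast
  obtain C where C: "\<And>x. norm (\<pi> x) \<le> C * norm x"
    using bounded_linear.bounded[OF assms(1)] by (metis mult.commute)
  show ?thesis
  proof (intro exI conjI ballI)
    show "open (\<pi> -` T)"
      using \<open>open T\<close> assms(1) by (intro continuous_open_vimage linear_continuous_at)
    show "y \<in> \<pi> -` T"
      using \<open>\<pi> y \<in> T\<close> by simp
    fix y' assume "y' \<in> \<pi> -` S \<inter> \<pi> -` T"
    then have "norm (f (\<pi> y') - f (\<pi> y)) \<le> B * norm (\<pi> y' - \<pi> y)"
      using B by simp
    also have "\<dots> \<le> \<bar>B\<bar> * norm (\<pi> y' - \<pi> y)"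
      by (intro mult_right_mono) auto
    also have "\<dots> \<le> \<bar>B\<bar> * C * norm (y' - y)"
      using C[of "y' - y"] linear_diff[OF bounded_linear.linear[OF assms(1)]]
      by (simp add: mult.assoc mult_left_mono)
    finally show "norm (f (\<pi> y') - f (\<pi> y)) \<le> \<bar>B\<bar> * C * norm (y' - y)" .
  qed
qed

lemma negligible_locally_Lipschitz_image_lowdim:
  fixes f :: "'M::euclidean_space \<Rightarrow> 'N::euclidean_space"
  assumes "DIM('M) < DIM('N)"
    and lips: "\<And>x. x \<in> S \<Longrightarrow>
      \<exists>T B. open T \<and> x \<in> T \<and> (\<forall>y \<in> S \<inter> T. norm (f y - f x) \<le> B * norm (y - x))"
  shows "negligible (f ` S)"
proof -
  \<comment> \<open>Lift \<open>S\<close> into a coordinate hyperplane of \<open>'N\<close>, where it is null, and undo the lift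
    by a linear map before applying \<open>f\<close>.\<close>
  obtain lift :: "'M \<times> real \<Rightarrow> 'N" and drop :: "'N \<Rightarrow> 'M \<times> real" and j :: 'N
    where "linear drop" and drop_lift: "\<And>z. drop (lift z) = z"
      and "j \<in> Basis" and j: "\<And>x. lift (x, 0) \<bullet> j = 0"
    using lowerdim_embeddings[OF assms(1)] by metis
  define \<pi> where "\<pi> = fst \<circ> drop"
  have "bounded_linear \<pi>"
    unfolding \<pi>_def using \<open>linear drop\<close>
    by (simp add: linear_conv_bounded_linear[symmetric] linear_compose[OF _ linear_fst])
  define S' where "S' = (\<lambda>x. lift (x, 0)) ` S"
  have "negligible S'"
    by (rule negligible_subset[OF negligible_standard_hyperplane[OF \<open>j \<in> Basis\<close>, of 0]])
      (auto simp: S'_def j)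
  moreover have "\<exists>T B. open T \<and> y \<in> T \<and> (\<forall>y' \<in> S' \<inter> T. norm (f (\<pi> y') - f (\<pi> y)) \<le> B * norm (y' - y))"
    if "y \<in> S'" for y
  proof -
    have "S' \<subseteq> \<pi> -` S" "\<pi> y \<in> S"
      using that by (auto simp: S'_def \<pi>_def drop_lift)
    with locally_Lipschitz_at_comp_bounded_linear[OF \<open>bounded_linear \<pi>\<close> lips[OF \<open>\<pi> y \<in> S\<close>]]
    show ?thesis
      by blast
  qed
  ultimately have "negligible ((f \<circ> \<pi>) ` S')"
    by (intro negligible_locally_Lipschitz_image) auto
  moreover have "(f \<circ> \<pi>) ` S' = f ` S"
    unfolding S'_def image_comp by (simp add: o_def \<pi>_def drop_lift)
  ultimately show ?thesis
    by simp
qed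

definition variation_sums :: "(real \<Rightarrow> 'a::real_normed_vector) \<Rightarrow> real \<Rightarrow> real \<Rightarrow> real set" where
  "variation_sums f a s = {\<Sum>i<n. norm (f (p (Suc i)) - f (p i)) | n p.
      (\<forall>i\<le>n. a \<le> p i \<and> p i \<le> s) \<and> (\<forall>i<n. p i \<le> p (Suc i))}"

text \<open>Only meaningful for maps of bounded variation: otherwise \<open>Sup\<close> is applied to an unbounded set.\<close>

definition variation :: "(real \<Rightarrow> 'a::real_normed_vector) \<Rightarrow> real \<Rightarrow> real \<Rightarrow> real" where
  "variation f a s = Sup (variation_sums f a s)"

lemma bdd_above_variation_sums:
  assumes "bounded_variation_on f a b" "t \<le> b"
  shows "bdd_above (variation_sums f a t)"
proof -
  obtain M where M: "\<And>n p. (\<forall>i\<le>n. a \<le> p i \<and> p i \<le> b) \<Longrightarrow> (\<forall>i<n. p i \<le> p (Suc i)) \<Longrightarrow>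
      (\<Sum>i<n. norm (f (p (Suc i)) - f (p i))) \<le> M"
    using assms(1) unfolding bounded_variation_on_def by blast
  show ?thesis
  proof (rule bdd_aboveI)
    fix \<sigma> assume "\<sigma> \<in> variation_sums f a t"
    then obtain n p where "\<forall>i\<le>n. a \<le> p i \<and> p i \<le> t" "\<forall>i<n. p i \<le> p (Suc i)"
      and "\<sigma> = (\<Sum>i<n. norm (f (p (Suc i)) - f (p i)))"
      unfolding variation_sums_def by blast
    then show "\<sigma> \<le> M"
      using M[of n p] \<open>t \<le> b\<close> by fastforce
  qed
qed

lemma variation_sums_extend:
  assumes "\<sigma> \<in> variation_sums f a s" "s \<le> t"
  shows "\<exists>\<sigma>' \<in> variation_sums f a t. \<sigma> + norm (f t - f s) \<le> \<sigma>'"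
proof -
  from assms(1) obtain n p where p: "\<forall>i\<le>n. a \<le> p i \<and> p i \<le> s" "\<forall>i<n. p i \<le> p (Suc i)"
    and \<sigma>: "\<sigma> = (\<Sum>i<n. norm (f (p (Suc i)) - f (p i)))"
    unfolding variation_sums_def by blast
  define q where "q = p(Suc n := s, Suc (Suc n) := t)"
  have "(\<Sum>i<n. norm (f (q (Suc i)) - f (q i))) = \<sigma>"
    unfolding \<sigma> by (rule sum.cong) (auto simp: q_def)
  then have q_sum: "(\<Sum>i<Suc (Suc n). norm (f (q (Suc i)) - f (q i)))
      = \<sigma> + norm (f s - f (p n)) + norm (f t - f s)"
    by (simp add: q_def)
  have "(\<Sum>i<Suc (Suc n). norm (f (q (Suc i)) - f (q i))) \<in> variation_sums f a t"
    unfolding variation_sums_def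
  proof (intro CollectI exI conjI)
    show "\<forall>i\<le>Suc (Suc n). a \<le> q i \<and> q i \<le> t"
      using p assms by (auto simp: q_def le_Suc_eq)
    show "\<forall>i<Suc (Suc n). q i \<le> q (Suc i)"
      using p assms by (auto simp: q_def less_Suc_eq)
  qed simp
  moreover have "\<sigma> + norm (f t - f s) \<le> \<sigma> + norm (f s - f (p n)) + norm (f t - f s)"
    by simp
  ultimately show ?thesis
    unfolding q_sum[symmetric] by blast
qed

lemma norm_diff_le_variation_diff:
  assumes "bounded_variation_on f a b" "a \<le> s" "s \<le> t" "t \<le> b"
  shows "norm (f t - f s) \<le> variation f a t - variation f a s"
proof -
  have bdd: "bdd_above (variation_sums f a t)"
    using assms(1,4) by (rule bdd_above_variation_sums)
  have "0 \<in> variation_sums f a s"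
    unfolding variation_sums_def using \<open>a \<le> s\<close> by (auto intro!: exI[of _ 0] exI[of _ "\<lambda>_. a"])
  moreover have "\<sigma> + norm (f t - f s) \<le> variation f a t" if "\<sigma> \<in> variation_sums f a s" for \<sigma>
    using variation_sums_extend[OF that \<open>s \<le> t\<close>] cSup_upper[OF _ bdd]
    unfolding variation_def by (meson order_trans)
  ultimately have "variation f a s \<le> variation f a t - norm (f t - f s)"
    unfolding variation_def[of f a s] by (intro cSup_least) (auto simp: algebra_simps)
  then show ?thesis
    by linarith
qed

lemma dist_le_variation_dist:
  assumes "bounded_variation_on f a b" "s \<in> {a..b}" "t \<in> {a..b}"
  shows "dist (f s) (f t) \<le> dist (variation f a s) (variation f a t)"
  using norm_diff_le_variation_diff[OF assms(1), of s t] norm_diff_le_variation_diff[OF assms(1), of t s] assms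
  by (cases "s \<le> t") (auto simp: dist_norm dist_real_def norm_minus_commute)

lemma bounded_variation_on_factors_through_lipschitz:
  fixes f :: "real \<Rightarrow> 'a::real_normed_vector"
  assumes "bounded_variation_on f a b"
  obtains g :: "real \<Rightarrow> 'a" where "1-lipschitz_on (variation f a ` {a..b}) g"
    and "\<And>s. s \<in> {a..b} \<Longrightarrow> g (variation f a s) = f s"
proof
  let ?L = "variation f a"
  define g where "g u = f (SOME s. s \<in> {a..b} \<and> ?L s = u)" for u
  show g_L: "g (?L s) = f s" if "s \<in> {a..b}" for s
  proof -
    define s' where "s' = (SOME s'. s' \<in> {a..b} \<and> ?L s' = ?L s)"
    have "s' \<in> {a..b} \<and> ?L s' = ?L s"
      unfolding s'_def by (rule someI[of _ s]) (use that in simp)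
    then have "dist (f s') (f s) \<le> 0"
      using dist_le_variation_dist[OF assms _ that, of s'] by simp
    then show ?thesis
      by (simp add: g_def s'_def)
  qed
  show "1-lipschitz_on (?L ` {a..b}) g"
    by (rule lipschitz_onI) (auto simp: g_L dist_le_variation_dist[OF assms])
qed

definition secant_slope :: "real \<times> 'a \<Rightarrow> real \<times> 'a \<Rightarrow> 'a::real_normed_vector" where
  "secant_slope p q = (snd p - snd q) /\<^sub>R (fst p - fst q)"

definition secant_slopes :: "(real \<times> 'a::real_normed_vector) set \<Rightarrow> 'a set" where
  "secant_slopes K = {secant_slope p q | p q. p \<in> K \<and> q \<in> K \<and> fst p \<noteq> fst q}"

lemma secant_slopes_mono: "K \<subseteq> K' \<Longrightarrow> secant_slopes K \<subseteq> secant_slopes K'"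
  unfolding secant_slopes_def by blast

lemma norm_scaleR_inverse_diff_le:
  fixes N N0 :: "'a::real_normed_vector"
  assumes "D \<noteq> 0" "D0 \<noteq> 0"
  shows "norm (N /\<^sub>R D - N0 /\<^sub>R D0) \<le> (\<bar>D0\<bar> * norm (N - N0) + \<bar>D - D0\<bar> * norm N0) / \<bar>D * D0\<bar>"
proof -
  have "N /\<^sub>R D - N0 /\<^sub>R D0 = (1 / (D * D0)) *\<^sub>R (D0 *\<^sub>R (N - N0) - (D - D0) *\<^sub>R N0)"
    using assms by (simp add: scaleR_diff_right scaleR_diff_left scaleR_scaleR field_simps)
  then have "norm (N /\<^sub>R D - N0 /\<^sub>R D0) = norm (D0 *\<^sub>R (N - N0) - (D - D0) *\<^sub>R N0) / \<bar>D * D0\<bar>"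
    by (simp add: divide_inverse abs_mult)
  also have "\<dots> \<le> (\<bar>D0\<bar> * norm (N - N0) + \<bar>D - D0\<bar> * norm N0) / \<bar>D * D0\<bar>"
    by (intro divide_right_mono order.trans[OF norm_triangle_ineq4]) auto
  finally show ?thesis .
qed

lemma secant_slope_locally_Lipschitz_at:
  fixes p0 q0 :: "real \<times> 'a::real_normed_vector"
  assumes "fst p0 \<noteq> fst q0"
  obtains r B where "r > 0" "B \<ge> 0"
    "\<And>p q. dist p p0 + dist q q0 \<le> r \<Longrightarrow>
      norm (secant_slope p q - secant_slope p0 q0) \<le> B * (dist p p0 + dist q q0)"
proof
  define d where "d = \<bar>fst p0 - fst q0\<bar>"
  define n0 where "n0 = norm (snd p0 - snd q0)"
  have "d > 0"
    using assms by (simp add: d_def)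
  show "d / 2 > 0" "(d + n0) / (d * d / 2) \<ge> 0"
    using \<open>d > 0\<close> by (auto simp: n0_def)
  fix p q :: "real \<times> 'a"
  define e where "e = dist p p0 + dist q q0"
  assume "dist p p0 + dist q q0 \<le> d / 2"
  then have "e \<le> d / 2"
    by (simp add: e_def)
  define D where "D = fst p - fst q"
  have D_close: "\<bar>D - (fst p0 - fst q0)\<bar> \<le> e"
    using dist_fst_le[of p p0] dist_fst_le[of q q0] by (simp add: D_def e_def dist_real_def)
  then have D_large: "\<bar>D\<bar> \<ge> d / 2"
    using \<open>e \<le> d / 2\<close> by (simp add: d_def)
  with \<open>d > 0\<close> have "D \<noteq> 0"
    by auto
  have "norm ((snd p - snd q) - (snd p0 - snd q0)) = norm ((snd p - snd p0) - (snd q - snd q0))"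
    by (simp add: algebra_simps)
  also have "\<dots> \<le> norm (snd p - snd p0) + norm (snd q - snd q0)"
    by (rule norm_triangle_ineq4)
  also have "\<dots> \<le> e"
    using dist_snd_le[of p p0] dist_snd_le[of q q0] by (simp add: e_def dist_norm)
  finally have N_close: "norm ((snd p - snd q) - (snd p0 - snd q0)) \<le> e" .
  have "norm (secant_slope p q - secant_slope p0 q0)
      \<le> (d * norm ((snd p - snd q) - (snd p0 - snd q0)) + \<bar>D - (fst p0 - fst q0)\<bar> * n0) / (\<bar>D\<bar> * d)"
    using norm_scaleR_inverse_diff_le[OF \<open>D \<noteq> 0\<close>, of "fst p0 - fst q0" "snd p - snd q" "snd p0 - snd q0"] assms
    by (simp add: secant_slope_def D_def d_def n0_def abs_mult mult.commute)
  also have "\<dots> \<le> (d * e + e * n0) / (\<bar>D\<bar> * d)"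
    using N_close D_close \<open>d > 0\<close>
    by (intro divide_right_mono add_mono mult_left_mono mult_right_mono) (auto simp: n0_def)
  also have "\<dots> \<le> (d * e + e * n0) / (d / 2 * d)"
    using D_large \<open>d > 0\<close> by (intro divide_left_mono mult_right_mono) (auto simp: e_def n0_def)
  also have "\<dots> = (d + n0) / (d * d / 2) * e"
    by (simp add: field_simps)
  finally show "norm (secant_slope p q - secant_slope p0 q0) \<le> (d + n0) / (d * d / 2) * (dist p p0 + dist q q0)"
    by (simp add: e_def)
qed

lemma secant_slope_comp_lipschitz_locally_Lipschitz:
  fixes g :: "real \<Rightarrow> real \<times> 'a::real_normed_vector"
  assumes g: "C-lipschitz_on A g" and "z0 \<in> A \<times> A" and "fst (g (fst z0)) \<noteq> fst (g (snd z0))"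
  shows "\<exists>T B. open T \<and> z0 \<in> T \<and> (\<forall>z \<in> (A \<times> A) \<inter> T.
    norm (secant_slope (g (fst z)) (g (snd z)) - secant_slope (g (fst z0)) (g (snd z0))) \<le> B * norm (z - z0))"
proof -
  obtain r B where "r > 0" "B \<ge> 0" and rB: "\<And>p q.
      dist p (g (fst z0)) + dist q (g (snd z0)) \<le> r \<Longrightarrow>
      norm (secant_slope p q - secant_slope (g (fst z0)) (g (snd z0)))
        \<le> B * (dist p (g (fst z0)) + dist q (g (snd z0)))"
    using secant_slope_locally_Lipschitz_at[OF assms(3)] by blast
  have "C \<ge> 0"
    using g by (rule lipschitz_on_nonneg)
  show ?thesis
  proof (intro exI conjI ballI)
    show "open (ball z0 (r / (2 * C + 1)))" "z0 \<in> ball z0 (r / (2 * C + 1))"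
      using \<open>r > 0\<close> \<open>C \<ge> 0\<close> by auto
    fix z assume z: "z \<in> (A \<times> A) \<inter> ball z0 (r / (2 * C + 1))"
    have "dist (g (fst z)) (g (fst z0)) + dist (g (snd z)) (g (snd z0))
        \<le> C * dist (fst z) (fst z0) + C * dist (snd z) (snd z0)"
      using z \<open>z0 \<in> A \<times> A\<close> by (intro add_mono lipschitz_onD[OF g]) auto
    also have "\<dots> \<le> C * dist z z0 + C * dist z z0"
      using dist_fst_le[of z z0] dist_snd_le[of z z0] \<open>C \<ge> 0\<close>
      by (intro add_mono mult_left_mono) auto
    finally have close: "dist (g (fst z)) (g (fst z0)) + dist (g (snd z)) (g (snd z0)) \<le> 2 * C * dist z z0"
      by simp
    have "(2 * C + 1) * dist z z0 < r"
      using z \<open>C \<ge> 0\<close> by (simp add: dist_commute field_simps)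
    then have "2 * C * dist z z0 \<le> r"
      using zero_le_dist[of z z0] by (simp only: distrib_right mult_1)
    with close have "dist (g (fst z)) (g (fst z0)) + dist (g (snd z)) (g (snd z0)) \<le> r"
      by linarith
    then have "norm (secant_slope (g (fst z)) (g (snd z)) - secant_slope (g (fst z0)) (g (snd z0)))
        \<le> B * (dist (g (fst z)) (g (fst z0)) + dist (g (snd z)) (g (snd z0)))"
      by (rule rB)
    also have "\<dots> \<le> B * (2 * C * dist z z0)"
      using close \<open>B \<ge> 0\<close> by (rule mult_left_mono)
    finally show "norm (secant_slope (g (fst z)) (g (snd z)) - secant_slope (g (fst z0)) (g (snd z0)))
        \<le> 2 * B * C * norm (z - z0)"
      by (simp add: dist_norm mult.assoc)
  qed
qed

lemma negligible_secant_slopes_lipschitz_image: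
  fixes g :: "real \<Rightarrow> real \<times> 'a::euclidean_space"
  assumes "DIM('a) \<ge> 3" and g: "C-lipschitz_on A g"
  shows "negligible (secant_slopes (g ` A))"
proof -
  define S where "S = {z \<in> A \<times> A. fst (g (fst z)) \<noteq> fst (g (snd z))}"
  define F where "F z = secant_slope (g (fst z)) (g (snd z))" for z :: "real \<times> real"
  have "secant_slopes (g ` A) = F ` S"
  proof (intro equalityI subsetI)
    fix w assume "w \<in> secant_slopes (g ` A)"
    then obtain u v where "u \<in> A" "v \<in> A" "fst (g u) \<noteq> fst (g v)" "w = secant_slope (g u) (g v)"
      unfolding secant_slopes_def by blast
    then show "w \<in> F ` S"
      unfolding F_def S_def by (intro image_eqI[of _ _ "(u, v)"]) auto
  next
    fix w assume "w \<in> F ` S"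
    then obtain u v where "u \<in> A" "v \<in> A" "fst (g u) \<noteq> fst (g v)" "w = F (u, v)"
      by (auto simp: S_def)
    then show "w \<in> secant_slopes (g ` A)"
      unfolding F_def secant_slopes_def by (intro CollectI exI[of _ "g u"] exI[of _ "g v"]) auto
  qed
  moreover have "negligible (F ` S)"
  proof (rule negligible_locally_Lipschitz_image_lowdim)
    show "DIM(real \<times> real) < DIM('a)"
      using assms(1) by simp
    fix z0 assume "z0 \<in> S"
    then have "z0 \<in> A \<times> A" and z0: "fst (g (fst z0)) \<noteq> fst (g (snd z0))"
      by (auto simp: S_def)
    have "S \<subseteq> A \<times> A"
      by (auto simp: S_def)
    obtain T B where "open T" "z0 \<in> T"
      and "\<forall>z \<in> (A \<times> A) \<inter> T. norm (F z - F z0) \<le> B * norm (z - z0)"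
      unfolding F_def using secant_slope_comp_lipschitz_locally_Lipschitz[OF g \<open>z0 \<in> A \<times> A\<close>] z0 by blast
    with \<open>S \<subseteq> A \<times> A\<close>
    show "\<exists>T B. open T \<and> z0 \<in> T \<and> (\<forall>z \<in> S \<inter> T. norm (F z - F z0) \<le> B * norm (z - z0))"
      by blast
  qed
  ultimately show ?thesis
    by simp
qed

lemma negligible_secant_slopes_bounded_variation:
  fixes f :: "real \<Rightarrow> real \<times> 'a::euclidean_space"
  assumes "DIM('a) \<ge> 3" and "bounded_variation_on f a b"
  shows "negligible (secant_slopes (f ` {a..b}))"
proof -
  obtain g where g: "1-lipschitz_on (variation f a ` {a..b}) g"
    and g_variation: "\<And>s. s \<in> {a..b} \<Longrightarrow> g (variation f a s) = f s"
    using bounded_variation_on_factors_through_lipschitz[OF assms(2)] by blast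
  have "f ` {a..b} = g ` variation f a ` {a..b}"
    unfolding image_image by (rule image_cong) (simp_all add: g_variation)
  then show ?thesis
    using negligible_secant_slopes_lipschitz_image[OF assms(1) g] by simp
qed

lemma inj_on_shear:
  assumes "w \<notin> secant_slopes K"
  shows "inj_on (\<lambda>x. snd x - fst x *\<^sub>R w) K"
proof (rule inj_onI)
  fix p q assume "p \<in> K" "q \<in> K" and "snd p - fst p *\<^sub>R w = snd q - fst q *\<^sub>R w"
  then have diff: "snd p - snd q = (fst p - fst q) *\<^sub>R w"
    by (simp add: algebra_simps)
  show "p = q"
  proof (cases "fst p = fst q")
    case True
    with diff show ?thesis
      by (simp add: prod_eq_iff)
  next
    case False
    with diff have "w = secant_slope p q"
      by (simp add: secant_slope_def)
    with assms \<open>p \<in> K\<close> \<open>q \<in> K\<close> False show ?thesis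
      unfolding secant_slopes_def by blast
  qed
qed

lemma onorm_shear_minus_snd_le:
  fixes w :: "'a::real_normed_vector"
  shows "onorm (\<lambda>x::real \<times> 'a. (snd x - fst x *\<^sub>R w) - snd x) \<le> norm w"
proof (rule onorm_bound)
  show "0 \<le> norm w"
    by simp
  fix x :: "real \<times> 'a"
  have "norm ((snd x - fst x *\<^sub>R w) - snd x) = \<bar>fst x\<bar> * norm w"
    by simp
  also have "\<dots> \<le> norm x * norm w"
    using norm_fst_le[of "fst x" "snd x"] by (intro mult_right_mono) auto
  finally show "norm ((snd x - fst x *\<^sub>R w) - snd x) \<le> norm w * norm x"
    by (simp add: mult.commute)
qed

lemma exists_perturbed_projection_inj_on:
  fixes \<gamma> :: "'z \<Rightarrow> real \<times> 'a::euclidean_space"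
  assumes "inj_on \<gamma> Z" "negligible (secant_slopes (\<gamma> ` Z))" "\<epsilon> > 0"
  shows "\<exists>T. linear T \<and> onorm (\<lambda>x. T x - snd x) < \<epsilon> \<and> inj_on (T \<circ> \<gamma>) Z"
proof -
  have "\<not> negligible (ball (0::'a) \<epsilon>)"
    using \<open>\<epsilon> > 0\<close> by (intro open_not_negligible) auto
  with assms(2) have "\<not> ball 0 \<epsilon> \<subseteq> secant_slopes (\<gamma> ` Z)"
    using negligible_subset by blast
  then obtain w where "norm w < \<epsilon>" "w \<notin> secant_slopes (\<gamma> ` Z)"
    using mem_ball_0 by blast
  show ?thesis
  proof (intro exI conjI)
    show "linear (\<lambda>x::real \<times> 'a. snd x - fst x *\<^sub>R w)"
      by (intro linearI) (auto simp: algebra_simps)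
    show "onorm (\<lambda>x. (snd x - fst x *\<^sub>R w) - snd x) < \<epsilon>"
      using onorm_shear_minus_snd_le[of w] \<open>norm w < \<epsilon>\<close> by linarith
    show "inj_on ((\<lambda>x. snd x - fst x *\<^sub>R w) \<circ> \<gamma>) Z"
      using \<open>inj_on \<gamma> Z\<close> inj_on_shear[OF \<open>w \<notin> secant_slopes (\<gamma> ` Z)\<close>] by (rule comp_inj_on)
  qed
qed

lemma sphere_subset_cis_image: "sphere (0::complex) 1 \<subseteq> (\<lambda>t. cis (2 * pi * t)) ` {0..1}"
proof
  fix z :: complex assume "z \<in> sphere 0 1"
  then have "z = cis (2 * pi * (Arg2pi z / (2 * pi)))"
    using complex_norm_eq_1_exp[of z] by (simp add: cis_conv_exp)
  moreover have "Arg2pi z / (2 * pi) \<in> {0..1}"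
    using Arg2pi[of z] by auto
  ultimately show "z \<in> (\<lambda>t. cis (2 * pi * t)) ` {0..1}"
    by (rule image_eqI)
qed

theorem lemma5p2:
  fixes \<epsilon> :: real
  assumes m3: "CARD('m::finite) \<ge> 3" and eps: "\<epsilon> > 0"
  shows
    "(\<forall>(a::real) b (\<gamma>::real \<Rightarrow> real \<times> (real^'m)).
        a \<le> b \<and> continuous_on {a..b} \<gamma> \<and> inj_on \<gamma> {a..b} \<and> bounded_variation_on \<gamma> a b \<longrightarrow>
        (\<exists>T::real \<times> (real^'m) \<Rightarrow> real^'m. linear T \<and> onorm (\<lambda>x. T x - snd x) < \<epsilon> \<and>
            inj_on (T \<circ> \<gamma>) {a..b}))
   \<and> (\<forall>\<gamma>::complex \<Rightarrow> real \<times> (real^'m).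
        continuous_on (sphere 0 1) \<gamma> \<and> inj_on \<gamma> (sphere 0 1) \<and> circle_bounded_variation \<gamma> \<longrightarrow>
        (\<exists>T::real \<times> (real^'m) \<Rightarrow> real^'m. linear T \<and> onorm (\<lambda>x. T x - snd x) < \<epsilon> \<and>
            inj_on (T \<circ> \<gamma>) (sphere 0 1)))"
proof (intro conjI allI impI)
  fix a b :: real and \<gamma> :: "real \<Rightarrow> real \<times> (real^'m)"
  assume "a \<le> b \<and> continuous_on {a..b} \<gamma> \<and> inj_on \<gamma> {a..b} \<and> bounded_variation_on \<gamma> a b"
  then have "inj_on \<gamma> {a..b}" "negligible (secant_slopes (\<gamma> ` {a..b}))"
    using negligible_secant_slopes_bounded_variation[of \<gamma> a b] m3 by auto
  then show "\<exists>T. linear T \<and> onorm (\<lambda>x. T x - snd x) < \<epsilon> \<and> inj_on (T \<circ> \<gamma>) {a..b}"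
    using eps by (rule exists_perturbed_projection_inj_on)
next
  fix \<gamma> :: "complex \<Rightarrow> real \<times> (real^'m)"
  assume "continuous_on (sphere 0 1) \<gamma> \<and> inj_on \<gamma> (sphere 0 1) \<and> circle_bounded_variation \<gamma>"
  then have "inj_on \<gamma> (sphere 0 1)" and bv: "bounded_variation_on (\<lambda>t. \<gamma> (cis (2 * pi * t))) 0 1"
    by (auto simp: circle_bounded_variation_def)
  have "\<gamma> ` sphere 0 1 \<subseteq> (\<lambda>t. \<gamma> (cis (2 * pi * t))) ` {0..1}"
    using image_mono[OF sphere_subset_cis_image, of \<gamma>] by (simp add: image_image)
  then have "negligible (secant_slopes (\<gamma> ` sphere 0 1))"
    using negligible_secant_slopes_bounded_variation[OF _ bv] m3
    by (auto intro: negligible_subset[OF _ secant_slopes_mono])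
  with \<open>inj_on \<gamma> (sphere 0 1)\<close>
  show "\<exists>T. linear T \<and> onorm (\<lambda>x. T x - snd x) < \<epsilon> \<and> inj_on (T \<circ> \<gamma>) (sphere 0 1)"
    using eps by (rule exists_perturbed_projection_inj_on)
qed

end
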